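(* Let $\rho_\lambda$ satisfy Condition (R), let $m\ge1$, $A\subset[m]$ and $\xi>0$. Then $$\mathcal{C}^m_\rho(A,\xi)\subset\bigcup_{A'\subset[m],\ |A'|=|A|}\mathcal{C}^m_1(A',\xi).$$
   Context: $\rho_\lambda(u)=\sum_i\rho_\lambda(|u_i|)$ for $u\in\mathbb{R}^m$; $u_A$ denotes $u$ restricted to the coordinates in $A$. $\mathcal{C}^m_\rho(A,\xi)=\{u\in\mathbb{R}^m:\rho_\lambda(u_{A^c})\le\xi\rho_\lambda(u_A)\}$ and $\mathcal{C}^m_1(A,\xi)=\{u\in\mathbb{R}^m:\|u_{A^c}\|_1\le\xi\|u_A\|_1\}$. Condition (R): $\rho_\lambda:[0,\infty)\to[0,\infty)$ is concave, nondecreasing, right-differentiable at $0$, $\rho_\lambda(0)=0$, $0<\rho_\lambda'(0^+)<\infty$, and there are constants $a,b\ge0$ independent of $\lambda$ with $\rho_\lambda(x)\ge\min\{a\lambda x,b\lambda^2\}$. *)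

theory Defs
  imports "HOL-Analysis.Analysis"
begin

text \<open>Condition (R) for a family of penalties rho lam : [0,inf) -> [0,inf), indexed by lam > 0.
  Functions are typed real => real; only their values on [0,inf) matter.\<close>
definition cond_R :: "(real \<Rightarrow> real \<Rightarrow> real) \<Rightarrow> bool" where
  "cond_R rho \<longleftrightarrow>
     (\<forall>lam>0.
        (\<forall>x\<ge>0. rho lam x \<ge> 0) \<and>
        concave_on {0..} (rho lam) \<and>
        mono_on {0..} (rho lam) \<and>
        rho lam 0 = 0 \<and>
        (\<exists>d. (rho lam has_real_derivative d) (at 0 within {0..}) \<and> 0 < d)) \<and>
     (\<exists>a b. a \<ge> 0 \<and> b \<ge> 0 \<and>
        (\<forall>lam>0. \<forall>x\<ge>0. rho lam x \<ge> min (a * lam * x) (b * lam\<^sup>2)))"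

definition rho_restr :: "(real \<Rightarrow> real) \<Rightarrow> real ^ 'm \<Rightarrow> 'm set \<Rightarrow> real" where
  "rho_restr r u S = (\<Sum>i\<in>S. r \<bar>u $ i\<bar>)"

definition l1_restr :: "real ^ 'm \<Rightarrow> 'm set \<Rightarrow> real" where
  "l1_restr u S = (\<Sum>i\<in>S. \<bar>u $ i\<bar>)"

definition cone_rho :: "(real \<Rightarrow> real) \<Rightarrow> ('m::finite) set \<Rightarrow> real \<Rightarrow> (real ^ 'm) set" where
  "cone_rho r A \<xi> = {u. rho_restr r u (- A) \<le> \<xi> * rho_restr r u A}"

definition cone_l1 :: "('m::finite) set \<Rightarrow> real \<Rightarrow> (real ^ 'm) set" where
  "cone_l1 A \<xi> = {u. l1_restr u (- A) \<le> \<xi> * l1_restr u A}"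

end

theory Submission
  imports Defs
begin

text \<open>Let \<open>S\<close> index the \<open>|A|\<close> largest entries of \<open>|u|\<close>. As \<open>\<rho>\<close> is nondecreasing,
  \<open>\<rho>(u\<^sub>S) \<ge> \<rho>(u\<^sub>A)\<close> and hence \<open>u\<close> also lies in the \<open>\<rho>\<close>-cone of \<open>S\<close>. Concavity and
  \<open>\<rho>(0) = 0\<close> make \<open>\<rho>(t)/t\<close> nonincreasing, so \<open>|u\<^sub>j| \<rho>(|u\<^sub>i|) \<le> |u\<^sub>i| \<rho>(|u\<^sub>j|)\<close> for
  \<open>i \<in> S\<close>, \<open>j \<notin> S\<close>; summing over all such pairs gives
  \<open>\<parallel>u(S\<^sup>c)\<parallel>\<^sub>1 \<rho>(u\<^sub>S) \<le> \<parallel>u\<^sub>S\<parallel>\<^sub>1 \<rho>(u(S\<^sup>c)) \<le> \<xi> \<parallel>u\<^sub>S\<parallel>\<^sub>1 \<rho>(u\<^sub>S)\<close>, which is the \<open>\<ell>\<^sub>1\<close>-cone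
  condition unless \<open>\<rho>(u\<^sub>S) = 0\<close>. In that case \<open>\<rho>(u(S\<^sup>c)) = 0\<close>, and since \<open>\<rho>'(0\<^sup>+) > 0\<close>
  makes \<open>\<rho>\<close> positive away from \<open>0\<close>, \<open>u\<close> vanishes off \<open>S\<close>.\<close>

lemma exists_top_subset:
  fixes f :: "'a \<Rightarrow> 'b::linordered_ab_group_add"
  assumes "finite I" and "k \<le> card I"
  shows "\<exists>S\<subseteq>I. card S = k \<and> (\<forall>i\<in>S. \<forall>j\<in>I - S. f j \<le> f i)"
proof -
  define F where "F = {S. S \<subseteq> I \<and> card S = k}"
  have "finite F"
    unfolding F_def using \<open>finite I\<close> by simp
  moreover have "F \<noteq> {}"
    unfolding F_def using obtain_subset_with_card_n[OF \<open>k \<le> card I\<close>] by blast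
  ultimately obtain S where "S \<in> F" and S_max: "Max (sum f ` F) = sum f S"
    by (rule obtains_MAX)
  have max: "sum f T \<le> sum f S" if "T \<in> F" for T
  proof -
    have "sum f T \<le> Max (sum f ` F)"
      using \<open>finite F\<close> that by (intro Max_ge) auto
    then show ?thesis
      using S_max by simp
  qed
  have "f j \<le> f i" if "i \<in> S" and "j \<in> I - S" for i j
  proof (rule ccontr)
    assume "\<not> f j \<le> f i"
    \<comment> \<open>swapping \<open>i\<close> for \<open>j\<close> would increase the sum\<close>
    define T where "T = insert j (S - {i})"
    have "finite S"
      using \<open>S \<in> F\<close> \<open>finite I\<close> finite_subset unfolding F_def by blast
    have "card S > 0"
      using that \<open>finite S\<close> card_gt_0_iff by blast
    then have "card T = card S"
      using that \<open>finite S\<close> unfolding T_def by simp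
    then have "T \<in> F"
      using \<open>S \<in> F\<close> that unfolding F_def T_def by auto
    moreover have "sum f T = sum f S - f i + f j"
      using that \<open>finite S\<close> unfolding T_def by (simp add: sum_diff1)
    ultimately show False
      using max \<open>\<not> f j \<le> f i\<close> by fastforce
  qed
  then show ?thesis
    using \<open>S \<in> F\<close> unfolding F_def by blast
qed

lemma sum_le_sum_top_subset:
  fixes w :: "'a \<Rightarrow> 'b::ordered_ab_group_add"
  assumes "finite I" and "B \<subseteq> I" and "S \<subseteq> I" and "card B = card S"
    and top: "\<forall>i\<in>S. \<forall>j\<in>I - S. w j \<le> w i"
  shows "sum w B \<le> sum w S"
proof -
  have fin: "finite B" "finite S"
    using finite_subset[OF _ \<open>finite I\<close>] \<open>B \<subseteq> I\<close> \<open>S \<subseteq> I\<close> by blast+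
  have "card (B - S) = card (S - B)"
    using \<open>card B = card S\<close> fin by (metis Int_commute card_Diff_subset_Int finite_Int)
  then obtain g where g: "bij_betw g (B - S) (S - B)"
    using finite_same_card_bij[OF finite_Diff[OF fin(1)] finite_Diff[OF fin(2)]] by blast
  have "sum w (B - S) \<le> sum (w \<circ> g) (B - S)"
    using top bij_betwE[OF g] \<open>B \<subseteq> I\<close> by (intro sum_mono) auto
  also have "\<dots> = sum w (S - B)"
    using sum.reindex_bij_betw[OF g] by simp
  finally show ?thesis
    using fin by (metis Int_commute add_right_mono sum.Int_Diff add.commute)
qed

lemma concave_on_origin_mult_le:
  fixes r :: "real \<Rightarrow> real"
  assumes "concave_on {0..} r" and "r 0 = 0" and "0 \<le> x" and "x \<le> y"
  shows "x * r y \<le> y * r x"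
proof (cases "y = 0")
  case False
  then have "y > 0"
    using assms by simp
  have "(1 - x / y) * r 0 + (x / y) * r y \<le> r ((1 - x / y) *\<^sub>R 0 + (x / y) *\<^sub>R y)"
    using \<open>y > 0\<close> assms(3,4) by (intro concave_onD[OF assms(1)]) auto
  then show ?thesis
    using \<open>y > 0\<close> \<open>r 0 = 0\<close> by (simp add: field_simps)
qed (use assms in simp)

lemma pos_if_right_deriv_pos:
  fixes r :: "real \<Rightarrow> real"
  assumes mono: "mono_on {0..} r" and "r 0 = 0"
    and deriv: "(r has_real_derivative d) (at 0 within {0..})" and "0 < d"
    and "x > 0"
  shows "r x > 0"
proof (rule ccontr)
  assume "\<not> r x > 0"
  then have vanish: "r y = 0" if "0 \<le> y" "y \<le> x" for y
    using mono_onD[OF mono] \<open>r 0 = 0\<close> that \<open>x > 0\<close> by (smt (verit) atLeast_iff)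
  have "((\<lambda>y. (r y - r 0) / (y - 0)) \<longlongrightarrow> d) (at 0 within {0..})"
    using deriv by (simp add: has_field_derivative_iff)
  then have lim: "((\<lambda>y. (r y - r 0) / (y - 0)) \<longlongrightarrow> d) (at_right 0)"
    by (rule tendsto_mono[rotated]) (intro at_le, auto)
  have "eventually (\<lambda>y. (r y - r 0) / (y - 0) = 0) (at_right 0)"
    unfolding eventually_at_right[OF \<open>x > 0\<close>]
    by (intro exI[of _ x]) (use \<open>x > 0\<close> vanish in auto)
  then have "((\<lambda>y. (r y - r 0) / (y - 0)) \<longlongrightarrow> 0) (at_right (0::real))"
    by (rule tendsto_eventually)
  then show False
    using lim tendsto_unique trivial_limit_at_right_real \<open>0 < d\<close> by force
qed

lemma cond_RD:
  assumes "cond_R rho" and "lam > 0"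
  shows "concave_on {0..} (rho lam)" and "mono_on {0..} (rho lam)" and "rho lam 0 = 0"
    and "\<And>x. x > 0 \<Longrightarrow> rho lam x > 0"
  using assms pos_if_right_deriv_pos unfolding cond_R_def by blast+

lemma sum_mult_sum_concave_le:
  fixes r :: "real \<Rightarrow> real"
  assumes "concave_on {0..} r" and "r 0 = 0"
    and top: "\<forall>i\<in>S. \<forall>j\<in>T. 0 \<le> g j \<and> g j \<le> g i"
  shows "(\<Sum>j\<in>T. g j) * (\<Sum>i\<in>S. r (g i)) \<le> (\<Sum>i\<in>S. g i) * (\<Sum>j\<in>T. r (g j))"
proof -
  have "(\<Sum>j\<in>T. g j) * (\<Sum>i\<in>S. r (g i)) = (\<Sum>j\<in>T. \<Sum>i\<in>S. g j * r (g i))"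
    by (simp add: sum_product)
  also have "\<dots> \<le> (\<Sum>j\<in>T. \<Sum>i\<in>S. g i * r (g j))"
    using top by (intro sum_mono concave_on_origin_mult_le[OF assms(1,2)]) auto
  also have "\<dots> = (\<Sum>i\<in>S. g i) * (\<Sum>j\<in>T. r (g j))"
    by (subst sum.swap) (simp add: sum_product)
  finally show ?thesis .
qed

lemma cone_rho_top_subset:
  fixes A S :: "('m::finite) set"
  assumes "mono_on {0..} r" and "\<xi> \<ge> 0" and "card S = card A"
    and top: "\<forall>i\<in>S. \<forall>j\<in>-S. \<bar>u $ j\<bar> \<le> \<bar>u $ i\<bar>"
    and "u \<in> cone_rho r A \<xi>"
  shows "u \<in> cone_rho r S \<xi>"
proof -
  let ?R = "rho_restr r u"
  have "\<forall>i\<in>S. \<forall>j\<in>UNIV - S. r \<bar>u $ j\<bar> \<le> r \<bar>u $ i\<bar>"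
    using top \<open>mono_on {0..} r\<close> by (auto intro: mono_onD)
  then have RA: "?R A \<le> ?R S"
    unfolding rho_restr_def using \<open>card S = card A\<close>
    by (intro sum_le_sum_top_subset[where I = UNIV]) auto
  have split: "?R UNIV = ?R (- X) + ?R X" for X
    unfolding rho_restr_def Compl_eq_Diff_UNIV by (rule sum.subset_diff) auto
  have "?R (- S) \<le> ?R (- A)"
    using split[of S] split[of A] RA by linarith
  moreover have "\<xi> * ?R A \<le> \<xi> * ?R S"
    using RA \<open>\<xi> \<ge> 0\<close> by (rule mult_left_mono)
  ultimately show ?thesis
    using \<open>u \<in> cone_rho r A \<xi>\<close> unfolding cone_rho_def by simp
qed

lemma cone_rho_top_subset_imp_cone_l1:
  fixes S :: "('m::finite) set"
  assumes "concave_on {0..} r" and "mono_on {0..} r" and "r 0 = 0"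
    and pos: "\<And>x. x > 0 \<Longrightarrow> r x > 0" and "\<xi> \<ge> 0"
    and top: "\<forall>i\<in>S. \<forall>j\<in>-S. \<bar>u $ j\<bar> \<le> \<bar>u $ i\<bar>"
    and "u \<in> cone_rho r S \<xi>"
  shows "u \<in> cone_l1 S \<xi>"
proof -
  let ?R = "rho_restr r u" and ?L = "l1_restr u"
  have r_nonneg: "r t \<ge> 0" if "t \<ge> 0" for t
    using mono_onD[OF \<open>mono_on {0..} r\<close>, of 0 t] that \<open>r 0 = 0\<close> by simp
  have R_nonneg: "?R X \<ge> 0" for X
    unfolding rho_restr_def by (intro sum_nonneg r_nonneg) simp
  have L_nonneg: "?L X \<ge> 0" for X
    unfolding l1_restr_def by (intro sum_nonneg) simp
  have cone: "?R (- S) \<le> \<xi> * ?R S"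
    using \<open>u \<in> cone_rho r S \<xi>\<close> unfolding cone_rho_def by simp
  have "?L (- S) \<le> \<xi> * ?L S"
  proof (cases "?R S > 0")
    case True
    have "?L (- S) * ?R S \<le> ?L S * ?R (- S)"
      unfolding rho_restr_def l1_restr_def
      using top by (intro sum_mult_sum_concave_le[OF assms(1,3)]) auto
    also have "\<dots> \<le> ?L S * (\<xi> * ?R S)"
      using cone L_nonneg by (rule mult_left_mono)
    finally have "?L (- S) * ?R S \<le> (\<xi> * ?L S) * ?R S"
      by (simp add: ac_simps)
    then show ?thesis
      using True by simp
  next
    case False
    then have "?R (- S) = 0"
      using R_nonneg[of S] R_nonneg[of "- S"] cone by simp
    then have "r \<bar>u $ j\<bar> = 0" if "j \<in> - S" for j
      using that r_nonneg unfolding rho_restr_def by (subst (asm) sum_nonneg_eq_0_iff) auto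
    then have "u $ j = 0" if "j \<in> - S" for j
      using pos[of "\<bar>u $ j\<bar>"] that by fastforce
    then show ?thesis
      using \<open>\<xi> \<ge> 0\<close> L_nonneg unfolding l1_restr_def by simp
  qed
  then show ?thesis
    unfolding cone_l1_def by simp
qed

theorem lemma12:
  fixes rho :: "real \<Rightarrow> real \<Rightarrow> real" and lam :: real and \<xi> :: real
    and A :: "('m::finite) set"
  assumes "cond_R rho" and "lam > 0" and "\<xi> > 0"
  shows "cone_rho (rho lam) A \<xi> \<subseteq> (\<Union>A'\<in>{A'. card A' = card A}. cone_l1 A' \<xi>)"
proof
  fix u :: "real ^ 'm"
  assume u: "u \<in> cone_rho (rho lam) A \<xi>"
  note r = cond_RD[OF assms(1,2)]
  have "\<xi> \<ge> 0"
    using \<open>\<xi> > 0\<close> by simp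
  have "card A \<le> card (UNIV :: 'm set)"
    by (rule card_mono) auto
  then obtain S where "card S = card A" and top: "\<forall>i\<in>S. \<forall>j\<in>- S. \<bar>u $ j\<bar> \<le> \<bar>u $ i\<bar>"
    using exists_top_subset[where I = UNIV and f = "\<lambda>i. \<bar>u $ i\<bar>", OF finite]
    unfolding Compl_eq_Diff_UNIV by blast
  have "u \<in> cone_rho (rho lam) S \<xi>"
    by (rule cone_rho_top_subset[OF r(2) \<open>\<xi> \<ge> 0\<close> \<open>card S = card A\<close> top u])
  then have "u \<in> cone_l1 S \<xi>"
    using cone_rho_top_subset_imp_cone_l1 r \<open>\<xi> \<ge> 0\<close> top by blast
  then show "u \<in> (\<Union>A'\<in>{A'. card A' = card A}. cone_l1 A' \<xi>)"
    using \<open>card S = card A\<close> by blast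
qed

end
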